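(* Let $\epsilon>0$, $R\ge 0$, and let $h:(0,\infty)\to(0,\infty)$, $h(t)=\sinh^{-1}\!\left(\frac{1}{\sinh t}\right)$. Let $[xyvw]$ be a quadrilateral in $\mathbb{H}^n$ (consisting of the geodesic segments $[xy],[yv],[vw],[wx]$) with angles $\angle wxy=\frac{\pi}{2}$, $\angle xyv=\frac{\pi}{2}$ and $\angle xwv\ge\frac{\pi}{2}$. Suppose $d(x,w)\le \frac R2$, $d(y,v)\le\frac R2$ and $d(v,w)\ge h^{-1}(\frac{\epsilon}{2})+R$. Then $d(x,w)\le\frac{\epsilon}{2}$.
   Context: $\mathbb{H}^n$ is real hyperbolic $n$-space with metric $d$; the quadrilateral need not be planar. The function $h$ is a decreasing bijection of $(0,\infty)$. *)

theory Defs
  imports "HOL-Analysis.Analysis"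
begin

text \<open>Hyperboloid model of real hyperbolic n-space, n = CARD('n):
  points (t,u) in R x R^n with Minkowski form u.u - t^2 = -1 and t > 0.\<close>

definition mink :: "real \<times> (real^'n) \<Rightarrow> real \<times> (real^'n) \<Rightarrow> real" where
  "mink p q = snd p \<bullet> snd q - fst p * fst q"

definition hyp_space :: "(real \<times> (real^'n)) set" where
  "hyp_space = {p. mink p p = -1 \<and> fst p > 0}"

definition hdist :: "real \<times> (real^'n) \<Rightarrow> real \<times> (real^'n) \<Rightarrow> real" where
  "hdist p q = arcosh (- mink p q)"

text \<open>Initial tangent vector at x of the geodesic from x to y.\<close>
definition htang :: "real \<times> (real^'n) \<Rightarrow> real \<times> (real^'n) \<Rightarrow> real \<times> (real^'n)" where
  "htang x y = y + mink x y *\<^sub>R x"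

text \<open>hangle a x b is the angle \<angle>axb at vertex x between geodesics [x a] and [x b].\<close>
definition hangle :: "real \<times> (real^'n) \<Rightarrow> real \<times> (real^'n) \<Rightarrow> real \<times> (real^'n) \<Rightarrow> real" where
  "hangle a x b = arccos (mink (htang x a) (htang x b) /
      (sqrt (mink (htang x a) (htang x a)) * sqrt (mink (htang x b) (htang x b))))"

definition hfun :: "real \<Rightarrow> real" where
  "hfun t = arsinh (1 / sinh t)"

definition hfun_inv :: "real \<Rightarrow> real" where
  "hfun_inv = the_inv_into {0<..} hfun"

end

theory Submission
  imports Defs
begin

(* Write a = d(x,w), c = d(y,v), L = d(x,y), D = d(v,w) and work in the
   hyperboloid model, where cosh d(p,q) = -<p,q> for the Minkowski form <_,_>.
   A right angle at vertex p between directions a, b means <a,b> + <p,a><p,b> = 0, an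
   obtuse one means <a,b> + <p,a><p,b> <= 0.  The two right angles at x and y and the
   obtuse angle at w yield
     (1) cosh a cosh D <= cosh L cosh c,
     (2) (cosh a cosh c cosh L - cosh D)^2 <= (sinh a sinh c)^2,
   the latter being Cauchy-Schwarz in the (spacelike) tangent space at x, applied to the
   tangent vector of [xw] and the tangent vector of [yv] (which, by the right angle at y,
   is also tangent at x).  Elementary real algebra turns (1) and (2) into
   sinh a sinh L <= 1, and (1) alone gives D <= L + c.  The hypothesis on D then forces
   L >= h(eps/2), hence sinh a <= 1 / sinh (h(eps/2)) = sinh (eps/2). *)

lemma mink_comm: "mink p q = mink q p"
  by (simp add: mink_def inner_commute mult.commute)

lemma mink_add_left: "mink (p + q) r = mink p r + mink q r"
  by (simp add: mink_def inner_add_left algebra_simps)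

lemma mink_add_right: "mink r (p + q) = mink r p + mink r q"
  by (simp add: mink_def inner_add_right algebra_simps)

lemma mink_scale_left: "mink (c *\<^sub>R p) r = c * mink p r"
  by (simp add: mink_def algebra_simps)

lemma mink_scale_right: "mink r (c *\<^sub>R p) = c * mink r p"
  by (simp add: mink_def algebra_simps)

lemmas mink_simps = mink_add_left mink_add_right mink_scale_left mink_scale_right

lemma hyp_self: "p \<in> hyp_space \<Longrightarrow> mink p p = -1"
  by (simp add: hyp_space_def mink_def)

lemma tangent_nonneg:
  assumes p: "p \<in> hyp_space" and T: "mink T p = 0"
  shows "mink T T \<ge> 0" and "mink T T = 0 \<Longrightarrow> T = 0"
proof -
  obtain t u where pe: "p = (t,u)" by (cases p)
  obtain s z where Te: "T = (s,z)" by (cases T)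
  have t: "t > 0" and uu: "u \<bullet> u = t*t - 1" using p by (auto simp: hyp_space_def mink_def pe)
  have zu: "z \<bullet> u = s * t" using T by (simp add: mink_def pe Te)
  have "(z \<bullet> u)^2 \<le> (z \<bullet> z) * (u \<bullet> u)"
    by (rule Cauchy_Schwarz_ineq)
  then have key: "t*t * ((z \<bullet> z) - s * s) \<ge> (z \<bullet> z)"
    using zu uu by (simp add: power2_eq_square algebra_simps)
  have zz: "z \<bullet> z \<ge> 0" by simp
  have "t*t*((z \<bullet> z) - s * s) \<ge> 0" using key zz by linarith
  moreover have "t*t > 0" using t by simp
  ultimately have "z \<bullet> z - s * s \<ge> 0" by (simp add: zero_le_mult_iff)
  then show "mink T T \<ge> 0" by (simp add: mink_def Te)
  assume "mink T T = 0"
  then have "(z \<bullet> z) - s * s = 0" by (simp add: mink_def Te)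
  then have "z \<bullet> z = 0" using key zz by (simp only: mult_zero_right)
  then have "z = 0" by simp
  then have "s = 0" using zu t by simp
  then show "T = 0" using \<open>z = 0\<close> Te by (simp add: zero_prod_def)
qed

lemma tangent_cauchy_schwarz:
  assumes p: "p \<in> hyp_space" and P: "mink P p = 0" and Q: "mink Q p = 0"
  shows "(mink P Q)^2 \<le> mink P P * mink Q Q"
proof -
  have quad: "mink P P + 2*l*mink P Q + l*l*mink Q Q \<ge> 0" for l
  proof -
    have "mink (P + l *\<^sub>R Q) p = 0" using P Q by (simp add: mink_simps)
    from tangent_nonneg(1)[OF p this]
    show ?thesis by (simp add: mink_simps mink_comm[of Q P] algebra_simps)
  qed
  show ?thesis
  proof (cases "mink Q Q = 0")
    case True
    have "mink P Q = 0"
    proof (rule ccontr)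
      assume ne: "mink P Q \<noteq> 0"
      define l where "l = - (mink P P + 1) / (2 * mink P Q)"
      have "2*l*mink P Q = - (mink P P + 1)" using ne by (simp add: l_def)
      with quad[of l] True show False by simp
    qed
    then show ?thesis using True by simp
  next
    case False
    have qq: "mink Q Q > 0" using False tangent_nonneg(1)[OF p Q] by simp
    define l where "l = - mink P Q / mink Q Q"
    have "mink P P + 2*l*mink P Q + l*l*mink Q Q = mink P P - (mink P Q)^2 / mink Q Q"
      using qq by (simp add: l_def field_simps power2_eq_square)
    with quad[of l] have "(mink P Q)^2 / mink Q Q \<le> mink P P" by simp
    then show ?thesis using qq by (simp add: divide_le_eq mult.commute)
  qed
qed

lemma mink_neg:
  assumes p: "p \<in> hyp_space" and q: "q \<in> hyp_space"
  shows "mink p q < 0"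
proof -
  obtain t u where pe: "p = (t,u)" by (cases p)
  obtain s z where qe: "q = (s,z)" by (cases q)
  have t: "t > 0" and uu: "u \<bullet> u = t*t - 1" using p by (auto simp: hyp_space_def mink_def pe)
  have s: "s > 0" and zz: "z \<bullet> z = s * s - 1" using q by (auto simp: hyp_space_def mink_def qe)
  have t1: "t*t \<ge> 1" using uu inner_ge_zero[of u] by linarith
  have s1: "s * s \<ge> 1" using zz inner_ge_zero[of z] by linarith
  have "(u \<bullet> u) * (z \<bullet> z) = (t * s)^2 - (t*t + s * s - 1)"
    unfolding uu zz by (simp add: power2_eq_square algebra_simps)
  then have "(u \<bullet> z)^2 < (t * s)^2"
    using Cauchy_Schwarz_ineq[of u z] t1 s1 by linarith
  then have "u \<bullet> z < t * s" by (rule power2_less_imp_less) (use t s in simp)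
  then show ?thesis by (simp add: mink_def pe qe)
qed

lemma htang_orth: "p \<in> hyp_space \<Longrightarrow> mink (htang p a) p = 0"
  by (simp add: htang_def mink_simps hyp_self mink_comm[of a p])

lemma htang_mink: "p \<in> hyp_space \<Longrightarrow>
   mink (htang p a) (htang p b) = mink a b + mink p a * mink p b"
  by (simp add: htang_def mink_simps hyp_self mink_comm[of a p] mink_comm[of b p] algebra_simps)

lemma htang_norm:
  "p \<in> hyp_space \<Longrightarrow> q \<in> hyp_space \<Longrightarrow> mink (htang p q) (htang p q) = (mink p q)^2 - 1"
  using htang_mink[of p q q] by (simp add: hyp_self power2_eq_square)

text \<open>The reversed Cauchy-Schwarz inequality \<open>-\<langle>p,q\<rangle> \<ge> 1\<close>, with equality only for
  \<open>p = q\<close>; it makes \<open>hdist\<close> well defined and positive on distinct points.\<close>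

lemma mink_le:
  assumes p: "p \<in> hyp_space" and q: "q \<in> hyp_space"
  shows "- mink p q \<ge> 1" and "- mink p q = 1 \<Longrightarrow> p = q"
proof -
  have tt: "mink (htang p q) (htang p q) = (mink p q)^2 - 1" by (rule htang_norm[OF p q])
  have "(mink p q)^2 \<ge> 1" using tangent_nonneg(1)[OF p htang_orth[OF p, of q]] tt by simp
  then have "1 \<le> \<bar>mink p q\<bar>" using abs_le_square_iff[of 1 "mink p q"] by simp
  then show "- mink p q \<ge> 1" using mink_neg[OF p q] by linarith
  assume e: "- mink p q = 1"
  then have "mink (htang p q) (htang p q) = 0" using tt by (simp add: power2_eq_square)
  then have "htang p q = 0" using tangent_nonneg(2)[OF p htang_orth[OF p]] by simp
  then show "p = q" using e by (simp add: htang_def)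
qed

lemma cosh_hdist: "p \<in> hyp_space \<Longrightarrow> q \<in> hyp_space \<Longrightarrow> cosh (hdist p q) = - mink p q"
  using mink_le(1)[of p q] by (simp add: hdist_def)

lemma hdist_nonneg: "p \<in> hyp_space \<Longrightarrow> q \<in> hyp_space \<Longrightarrow> hdist p q \<ge> 0"
  using mink_le(1)[of p q] by (simp add: hdist_def)

lemma htang_norm_sinh:
  "p \<in> hyp_space \<Longrightarrow> q \<in> hyp_space \<Longrightarrow> mink (htang p q) (htang p q) = (sinh (hdist p q))^2"
  using htang_norm[of p q] cosh_hdist[of p q] by (simp add: sinh_square_eq)

lemma tang_pos:
  assumes p: "p \<in> hyp_space" and q: "q \<in> hyp_space" and ne: "p \<noteq> q"
  shows "mink (htang p q) (htang p q) > 0"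
proof -
  have "- mink p q \<noteq> 1" using mink_le(2)[OF p q] ne by auto
  then have g1: "- mink p q > 1" using mink_le(1)[OF p q] by linarith
  have "1 < (- mink p q) * (- mink p q)" using less_1_mult[OF g1 g1] .
  then show ?thesis using htang_norm[OF p q] by (simp add: power2_eq_square)
qed

lemma hangle_cos:
  assumes p: "p \<in> hyp_space" and a: "a \<in> hyp_space" and b: "b \<in> hyp_space"
    and na: "a \<noteq> p" and nb: "b \<noteq> p"
  shows "cos (hangle a p b) * (sqrt (mink (htang p a) (htang p a)) * sqrt (mink (htang p b) (htang p b)))
           = mink (htang p a) (htang p b)"
    and "0 \<le> hangle a p b" and "hangle a p b \<le> pi"
proof -
  let ?A = "mink (htang p a) (htang p a)" and ?B = "mink (htang p b) (htang p b)"
    and ?C = "mink (htang p a) (htang p b)"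
  have A: "?A > 0" using tang_pos[OF p a] na by auto
  have B: "?B > 0" using tang_pos[OF p b] nb by auto
  have cs: "?C^2 \<le> ?A * ?B"
    using tangent_cauchy_schwarz[OF p htang_orth[OF p] htang_orth[OF p]] .
  have d: "sqrt ?A * sqrt ?B > 0" using A B by simp
  have "\<bar>?C\<bar> \<le> sqrt ?A * sqrt ?B"
    using cs A B by (metis real_sqrt_abs real_sqrt_le_mono real_sqrt_mult)
  then have z1: "-1 \<le> ?C / (sqrt ?A * sqrt ?B)" and z2: "?C / (sqrt ?A * sqrt ?B) \<le> 1"
    using d by (auto simp: divide_le_eq le_divide_eq abs_le_iff)
  have "cos (hangle a p b) = ?C / (sqrt ?A * sqrt ?B)"
    unfolding hangle_def using z1 z2 by (rule cos_arccos)
  moreover have "sqrt ?A * sqrt ?B \<noteq> 0" using d by linarith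
  ultimately show "cos (hangle a p b) * (sqrt ?A * sqrt ?B) = ?C"
    using nonzero_eq_divide_eq by blast
  show "0 \<le> hangle a p b" using z1 z2 by (simp add: hangle_def arccos_lbound)
  show "hangle a p b \<le> pi" using z1 z2 by (simp add: hangle_def arccos_ubound)
qed

lemma hangle_right:
  assumes p: "p \<in> hyp_space" and a: "a \<in> hyp_space" and b: "b \<in> hyp_space"
    and na: "a \<noteq> p" and nb: "b \<noteq> p" and r: "hangle a p b = pi/2"
  shows "mink a b + mink p a * mink p b = 0"
  using hangle_cos(1)[OF p a b na nb] r htang_mink[OF p] by simp

lemma hangle_obtuse:
  assumes p: "p \<in> hyp_space" and a: "a \<in> hyp_space" and b: "b \<in> hyp_space"
    and na: "a \<noteq> p" and nb: "b \<noteq> p" and r: "hangle a p b \<ge> pi/2"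
  shows "mink a b + mink p a * mink p b \<le> 0"
proof -
  have "cos (hangle a p b) \<le> cos (pi/2)"
    using cos_mono_le_eq[of "hangle a p b" "pi/2"] hangle_cos(2,3)[OF p a b na nb] r by simp
  then have c: "cos (hangle a p b) \<le> 0" by simp
  have "0 \<le> sqrt (mink (htang p a) (htang p a)) * sqrt (mink (htang p b) (htang p b))"
    using tang_pos[OF p a] tang_pos[OF p b] na nb by auto
  with c have "cos (hangle a p b) *
      (sqrt (mink (htang p a) (htang p a)) * sqrt (mink (htang p b) (htang p b))) \<le> 0"
    by (simp add: mult_nonpos_nonneg)
  then show ?thesis using hangle_cos(1)[OF p a b na nb] htang_mink[OF p] by simp
qed

text \<open>The right angle at \<open>y\<close> gives
  \<open>\<langle>x,v\<rangle> = -cosh d(x,y) cosh d(y,v)\<close>; inserting this into the obtuse-angle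
  condition at \<open>w\<close> compares the two "diagonal" products of cosines.\<close>

lemma quadrilateral_obtuse_vertex:
  assumes x: "x \<in> hyp_space" and y: "y \<in> hyp_space" and v: "v \<in> hyp_space" and w: "w \<in> hyp_space"
    and "x \<noteq> y" and "y \<noteq> v" and "v \<noteq> w" and "w \<noteq> x"
    and right_y: "hangle x y v = pi / 2" and obtuse_w: "hangle x w v \<ge> pi / 2"
  shows "cosh (hdist x w) * cosh (hdist v w) \<le> cosh (hdist x y) * cosh (hdist y v)"
proof -
  have "mink x v + mink y x * mink y v = 0"
    by (rule hangle_right[OF y x v _ _ right_y]) (use assms in auto)
  moreover have "mink x v + mink w x * mink w v \<le> 0"
    by (rule hangle_obtuse[OF w x v _ _ obtuse_w]) (use assms in auto)
  ultimately show ?thesis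
    using cosh_hdist[OF x w] cosh_hdist[OF v w] cosh_hdist[OF x y] cosh_hdist[OF y v]
      mink_comm[of w x] mink_comm[of w v] mink_comm[of y x] by simp
qed

text \<open>By the right angle at \<open>y\<close>, the tangent vector
  \<open>P\<close> of \<open>[yv]\<close> at \<open>y\<close> is also tangent at \<open>x\<close>, so Cauchy-Schwarz at \<open>x\<close> applies to
  \<open>P\<close> and the tangent vector \<open>Q\<close> of \<open>[xw]\<close>; the right angle at \<open>x\<close> evaluates \<open>\<langle>P,Q\<rangle>\<close>.\<close>

lemma quadrilateral_tangent_cs:
  assumes x: "x \<in> hyp_space" and y: "y \<in> hyp_space" and v: "v \<in> hyp_space" and w: "w \<in> hyp_space"
    and "x \<noteq> y" and "y \<noteq> v" and "w \<noteq> x"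
    and right_x: "hangle w x y = pi / 2" and right_y: "hangle x y v = pi / 2"
  shows "(cosh (hdist x w) * cosh (hdist y v) * cosh (hdist x y) - cosh (hdist v w))^2
           \<le> (sinh (hdist x w) * sinh (hdist y v))^2"
proof -
  have "mink w y + mink x w * mink x y = 0"
    by (rule hangle_right[OF x w y _ _ right_x]) (use assms in auto)
  then have rx: "mink w y = - mink x w * mink x y" by simp
  have "mink x v + mink y x * mink y v = 0"
    by (rule hangle_right[OF y x v _ _ right_y]) (use assms in auto)
  then have ry: "mink x v = - mink x y * mink y v" by (simp add: mink_comm[of y x])
  define P where "P = htang y v"
  define Q where "Q = htang x w"
  have Px: "mink P x = 0"
    using ry mink_comm[of v x] mink_comm[of y x]
    by (simp add: P_def htang_def mink_simps hyp_self[OF y])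
  have "mink P Q = mink v w + mink x w * mink v x + mink y v * mink y w
                   + mink y v * mink x w * mink y x"
    by (simp add: P_def Q_def htang_def mink_simps algebra_simps)
  also have "\<dots> = cosh (hdist x w) * cosh (hdist y v) * cosh (hdist x y) - cosh (hdist v w)"
    using rx ry cosh_hdist[OF x w] cosh_hdist[OF v w] cosh_hdist[OF x y] cosh_hdist[OF y v]
      mink_comm[of v x] mink_comm[of y w] mink_comm[of y x] mink_comm[of v w]
    by (simp add: algebra_simps)
  finally have PQ: "mink P Q = \<dots>" .
  have "(mink P Q)^2 \<le> mink P P * mink Q Q"
    by (rule tangent_cauchy_schwarz[OF x Px]) (simp add: Q_def htang_orth[OF x])
  then show ?thesis
    using PQ htang_norm_sinh[OF y v] htang_norm_sinh[OF x w]
    by (simp add: P_def Q_def power_mult_distrib mult.commute)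
qed

text \<open>Real-variable core: the two quadrilateral inequalities force
  \<open>sinh a sinh L \<le> 1\<close> (eliminate \<open>D\<close> and \<open>c\<close>, then use \<open>cosh\<^sup>2 = 1 + sinh\<^sup>2\<close>).\<close>

lemma sinh_product_le_one:
  fixes a c L D :: real
  assumes a: "a \<ge> 0" and c: "c \<ge> 0"
    and cs: "(cosh a * cosh c * cosh L - cosh D)^2 \<le> (sinh a * sinh c)^2"
    and ob: "cosh a * cosh D \<le> cosh L * cosh c"
  shows "sinh a * sinh L \<le> 1"
proof (cases "a = 0")
  case True then show ?thesis by simp
next
  case False
  then have sa: "sinh a > 0" using a by simp
  have sc: "sinh c \<ge> 0" using c by simp
  have ca: "cosh a \<ge> 1" and cc: "cosh c \<ge> 1" and cL: "cosh L \<ge> 1"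
    by (simp_all add: cosh_real_ge_1)
  have sa2: "sinh a * sinh a = cosh a * cosh a - 1"
    using sinh_square_eq[of a] by (simp add: power2_eq_square)
  have "cosh a * cosh c * cosh L - cosh D \<le> sinh a * sinh c"
    using cs by (rule power2_le_imp_le) (use sa sc in simp)
  then have "cosh a * (cosh a * cosh c * cosh L - cosh D) \<le> cosh a * (sinh a * sinh c)"
    using ca by (intro mult_left_mono) auto
  then have "cosh L * cosh c * (cosh a * cosh a - 1) \<le> cosh a * sinh c * sinh a"
    using ob by (simp add: algebra_simps)
  then have "cosh L * cosh c * sinh a * sinh a \<le> cosh a * sinh c * sinh a"
    by (simp only: sa2[symmetric] mult.assoc)
  then have "cosh L * cosh c * sinh a \<le> cosh a * sinh c"
    using sa by (simp add: algebra_simps)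
  also have "\<dots> \<le> cosh a * cosh c"
    using ca sinh_le_cosh_real[of c] by (intro mult_left_mono) auto
  finally have "cosh L * sinh a \<le> cosh a"
    using cc by (simp add: algebra_simps)
  then have "(cosh L * sinh a)^2 \<le> (cosh a)^2"
    using cL sa by (intro power_mono) auto
  then have "(sinh a * sinh L)^2 \<le> 1^2"
    by (simp add: power_mult_distrib cosh_square_eq algebra_simps)
  then show ?thesis by (rule power2_le_imp_le) simp
qed

text \<open>From the first quadrilateral inequality:
  \<open>cosh D \<le> cosh L cosh c \<le> cosh (L + c)\<close>, so \<open>D \<le> L + c\<close>.\<close>

lemma le_sum_of_cosh_product:
  fixes a c L D :: real
  assumes "D \<ge> 0" and "c \<ge> 0" and "L \<ge> 0"
    and ob: "cosh a * cosh D \<le> cosh L * cosh c"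
  shows "D \<le> L + c"
proof -
  have "cosh D \<le> cosh a * cosh D" using cosh_real_ge_1[of a] by simp
  also have "\<dots> \<le> cosh L * cosh c" by (rule ob)
  also have "\<dots> \<le> cosh (L + c)" using assms by (simp add: cosh_add)
  finally show ?thesis using assms by (simp add: cosh_real_nonneg_le_iff)
qed

text \<open>The function \<open>h\<close> is an involution of \<open>(0,\<infinity>)\<close>, so \<open>h\<^sup>-\<^sup>1 = h\<close> there.\<close>

lemma hfun_hfun: "t > 0 \<Longrightarrow> hfun (hfun t) = t"
  by (simp add: hfun_def arsinh_sinh_real)

lemma hfun_pos: "t > 0 \<Longrightarrow> hfun t > 0"
  by (simp add: hfun_def)

lemma hfun_inv_eq: "t > 0 \<Longrightarrow> hfun_inv t = hfun t"
proof -
  assume t: "t > 0"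
  have inj: "inj_on hfun {0<..}"
    by (rule inj_onI) (metis greaterThan_iff hfun_hfun)
  show ?thesis unfolding hfun_inv_def
    by (rule the_inv_into_f_eq[OF inj]) (use t hfun_hfun hfun_pos in auto)
qed

text \<open>The defining property of \<open>h\<close>: if \<open>sinh a sinh L \<le> 1\<close> and \<open>L \<ge> h(e)\<close>,
  then \<open>a \<le> e\<close>, since \<open>sinh (h e) = 1 / sinh e\<close>.\<close>

lemma le_of_sinh_product:
  fixes a L e :: real
  assumes e: "e > 0" and a: "a \<ge> 0" and prod: "sinh a * sinh L \<le> 1" and L: "L \<ge> hfun e"
  shows "a \<le> e"
proof -
  have sh: "sinh (hfun e) = 1 / sinh e" by (simp add: hfun_def)
  have pos: "sinh (hfun e) > 0" using hfun_pos[OF e] by simp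
  have "sinh a * sinh (hfun e) \<le> sinh a * sinh L"
    using L a by (intro mult_left_mono) auto
  with prod have "sinh a \<le> 1 / sinh (hfun e)"
    using pos by (simp add: le_divide_eq)
  then show ?thesis using sh by simp
qed

theorem mainTheorem5:
  fixes x y v w :: "real \<times> (real^'n)" and \<epsilon> R :: real
  assumes "\<epsilon> > 0" and "R \<ge> 0"
    and "x \<in> hyp_space" and "y \<in> hyp_space" and "v \<in> hyp_space" and "w \<in> hyp_space"
    and "x \<noteq> y" and "y \<noteq> v" and "v \<noteq> w" and "w \<noteq> x"
    and "hangle w x y = pi / 2" and "hangle x y v = pi / 2" and "hangle x w v \<ge> pi / 2"
    and "hdist x w \<le> R / 2" and "hdist y v \<le> R / 2"
    and "hdist v w \<ge> hfun_inv (\<epsilon> / 2) + R"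
  shows "hdist x w \<le> \<epsilon> / 2"
proof -
  have nonneg: "hdist x w \<ge> 0" "hdist y v \<ge> 0" "hdist x y \<ge> 0" "hdist v w \<ge> 0"
    using hdist_nonneg[of x w] hdist_nonneg[of y v] hdist_nonneg[of x y] hdist_nonneg[of v w]
      assms(3-6) by auto
  have obtuse: "cosh (hdist x w) * cosh (hdist v w) \<le> cosh (hdist x y) * cosh (hdist y v)"
    by (rule quadrilateral_obtuse_vertex) (use assms in auto)
  have cs: "(cosh (hdist x w) * cosh (hdist y v) * cosh (hdist x y) - cosh (hdist v w))^2
              \<le> (sinh (hdist x w) * sinh (hdist y v))^2"
    by (rule quadrilateral_tangent_cs) (use assms in auto)
  have prod: "sinh (hdist x w) * sinh (hdist x y) \<le> 1"
    using sinh_product_le_one[OF nonneg(1,2) cs obtuse] .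
  have "hdist v w \<le> hdist x y + hdist y v"
    using le_sum_of_cosh_product[OF nonneg(4,2,3) obtuse] .
  then have "hdist x y \<ge> hfun (\<epsilon> / 2)"
    using assms(1,2,15,16) hfun_inv_eq[of "\<epsilon> / 2"] by simp
  moreover have "\<epsilon> / 2 > 0" using assms(1) by simp
  ultimately show ?thesis using le_of_sinh_product[OF _ nonneg(1) prod] by blast
qed

end
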